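(* Let ${\cal G}$ be a colored graph and $L$ a line of color $i$ joining vertices $v$ and $w$, such that the bubbles of colors $\widehat i$ containing $v$ and $w$, call them $B_a$ and $B_b$, are distinct. Let ${\cal G}-L$ be the graph obtained by contracting $L$. Then (i) for each color $k\neq i$, the bubble of colors $\widehat k$ of ${\cal G}$ containing $v$ (which also contains $w$) becomes a bubble of ${\cal G}-L$ with two fewer vertices, three fewer lines, one fewer face and the same genus; all other bubbles of colors $\widehat k$, $k\neq i$, are unchanged; (ii) $B_a$ and $B_b$ are replaced by a single bubble of colors $\widehat i$ with $|n_a|+|n_b|-2$ vertices, $|l_a|+|l_b|-3$ lines, $|f_a|+|f_b|-3$ faces, and genus $g_a+g_b$. In particular, if $B_a$ is planar the merged bubble has genus $g_b$.
   Context: Colored graph: a finite connected bipartite multigraph (vertices "black" or "white", no loops) whose edges ("lines") carry a color in $\{0,1,2,3\}$ such that every vertex is incident to exactly one line of each color. For colors $i\neq j$, a face of colors $ij$ is a connected component of the subgraph formed by the lines of colors $i,j$. For a color $i$, $\widehat{i}=\{0,1,2,3\}\setminus\{i\}$; a bubble of colors $\widehat i$ is a connected component of the subgraph formed by all lines of colors in $\widehat i$; for a bubble $b$, $n_b,l_b$ are its vertices and lines, $f_b$ the faces of ${\cal G}$ with both colors in $\widehat i$ contained in $b$, and its genus is defined by $|n_b|-|l_b|+|f_b|=2-2g_b$; planar means $g_b=0$. Contraction of a line $L$ of color $i$ with endpoints $v,w$ (lying in distinct bubbles of colors $\widehat i$): for each color $j\neq i$ let $a_j$ (resp. $b_j$)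 be the other endpoint of the line of color $j$ at $v$ (resp. at $w$). Delete $v$, $w$ and all lines incident to them, and for each $j\neq i$ add a line of color $j$ between $a_j$ and $b_j$. The result ${\cal G}-L$ is again a colored graph. *)

theory Defs
  imports Complex_Main
begin

text \<open>A colored graph (4 colors 0..3) is encoded by its black vertices, its white
vertices, and for each color c a bijection lc c from black to white vertices:
the line of color c at the black vertex x joins x with lc c x.  A line is thus
identified with the pair (black endpoint, color).  This captures exactly the
bipartite multigraphs without loops in which every vertex has exactly one
incident line of each color.\<close>

record 'v cgraph =
  blk :: "'v set"
  wht :: "'v set"
  lc  :: "nat \<Rightarrow> 'v \<Rightarrow> 'v"

definition colors :: "nat set" where
  "colors = {0..3}"

definition verts :: "'v cgraph \<Rightarrow> 'v set" where
  "verts G = blk G \<union> wht G"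

definition adj :: "'v cgraph \<Rightarrow> nat set \<Rightarrow> 'v \<Rightarrow> 'v \<Rightarrow> bool" where
  "adj G C x y \<longleftrightarrow> (\<exists>c\<in>C. (x \<in> blk G \<and> y = lc G c x) \<or> (y \<in> blk G \<and> x = lc G c y))"

definition comp :: "'v cgraph \<Rightarrow> nat set \<Rightarrow> 'v \<Rightarrow> 'v set" where
  "comp G C x = {y. (adj G C)\<^sup>*\<^sup>* x y}"

definition colored_graph :: "'v cgraph \<Rightarrow> bool" where
  "colored_graph G \<longleftrightarrow> finite (blk G) \<and> finite (wht G) \<and> blk G \<inter> wht G = {}
     \<and> (\<forall>c\<in>colors. bij_betw (lc G c) (blk G) (wht G))
     \<and> verts G \<noteq> {} \<and> (\<forall>x\<in>verts G. \<forall>y\<in>verts G. (adj G colors)\<^sup>*\<^sup>* x y)"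

definition bubbles :: "'v cgraph \<Rightarrow> nat \<Rightarrow> 'v set set" where
  "bubbles G i = {comp G (colors - {i}) x | x. x \<in> verts G}"

definition blines :: "'v cgraph \<Rightarrow> nat set \<Rightarrow> 'v set \<Rightarrow> (nat \<times> 'v) set" where
  "blines G C S = {(c, x). x \<in> S \<inter> blk G \<and> c \<in> C}"

text \<open>faces of G with both colors in C contained in S; a face of colors ij is recorded
together with its color pair (i < j), since distinct faces may share a vertex set\<close>
definition bfaces :: "'v cgraph \<Rightarrow> nat set \<Rightarrow> 'v set \<Rightarrow> (nat \<times> nat \<times> 'v set) set" where
  "bfaces G C S = {(i, j, F). i \<in> C \<and> j \<in> C \<and> i < j \<and>
                     (\<exists>x\<in>verts G. F = comp G {i, j} x) \<and> F \<subseteq> S}"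

definition genus :: "'v cgraph \<Rightarrow> nat set \<Rightarrow> 'v set \<Rightarrow> real" where
  "genus G C S = (2 - (real (card S) - real (card (blines G C S)) + real (card (bfaces G C S)))) / 2"

text \<open>contraction of the line of color i at the black vertex b (joining b and w = lc G i b):
delete b and w; for j \<noteq> i the black vertex whose j-line went to w is now joined
by color j to lc G j b, the other endpoint of the j-line at b.\<close>
definition contract :: "'v cgraph \<Rightarrow> 'v \<Rightarrow> nat \<Rightarrow> 'v cgraph" where
  "contract G b i =
     \<lparr> blk = blk G - {b}, wht = wht G - {lc G i b},
       lc = (\<lambda>c x. if c \<noteq> i \<and> lc G c x = lc G i b then lc G c b else lc G c x) \<rparr>"

end

theory Submission
  imports Defs
begin

text \<open>
Everything is organised around the region of colors P: the union of the
P-components of the two deleted vertices E = {b, wt}.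
- Outside the region nothing changes: the P-components, lines and faces of G and
  of the contracted graph H coincide (comp_H_outside, unchanged_component).
- Inside the region, if P contains a color other than i, the region minus E is a
  single P-component of H (comp_H_inside).  The key input is that the face of
  colors c, c' \<noteq> i through b is a cycle, so after deleting b its remaining
  part still joins the c- and c'-neighbours of b (face_path_H, proved by
  following the orbit of b under the face map face_next).
- Counting: the region loses 2 vertices, one line of each color, and one face
  for each pair of colors different from i (faces_count): the faces through b
  and through wt merge, while a face of a pair containing i contains both.
For k \<noteq> i the region of colors \<open>\<widehat>k\<close> is the single bubble of the line
(bubble_of_line); for colors \<open>\<widehat>i\<close> it is the union of the two bubbles of the
endpoints (merged_bubble).
\<close>

lemma adj_sym: "adj G C x y \<Longrightarrow> adj G C y x"
  unfolding adj_def by blast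

lemma adj_mono: "adj G C x y \<Longrightarrow> C \<subseteq> D \<Longrightarrow> adj G D x y"
  unfolding adj_def by blast

lemma comp_refl: "x \<in> comp G C x"
  by (simp add: comp_def)

lemma comp_step: "y \<in> comp G C x \<Longrightarrow> adj G C y z \<Longrightarrow> z \<in> comp G C x"
  by (simp add: comp_def)

lemma comp_sym: "y \<in> comp G C x \<Longrightarrow> x \<in> comp G C y"
proof -
  have "symp (adj G C)" by (rule sympI) (rule adj_sym)
  then have "symp (adj G C)\<^sup>*\<^sup>*" by (rule symp_rtranclp)
  then show "y \<in> comp G C x \<Longrightarrow> x \<in> comp G C y" unfolding comp_def by (blast dest: sympD)
qed

lemma comp_trans: "y \<in> comp G C x \<Longrightarrow> z \<in> comp G C y \<Longrightarrow> z \<in> comp G C x"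
  by (auto simp: comp_def)

lemma comp_eq: "y \<in> comp G C x \<Longrightarrow> comp G C y = comp G C x"
  using comp_trans[of y G C x] comp_trans[OF comp_sym, of y G C x] by blast

lemma comp_meet: "z \<in> comp G C x \<Longrightarrow> z \<in> comp G C y \<Longrightarrow> comp G C x = comp G C y"
  using comp_eq[of z G C x] comp_eq[of z G C y] by simp

lemma rtranclp_adj_mono:
  assumes "(adj G C)\<^sup>*\<^sup>* x y" "C \<subseteq> D" shows "(adj G D)\<^sup>*\<^sup>* x y"
  using assms(1)
proof induction
  case (step y z)
  then show ?case using adj_mono[OF _ assms(2)] by (meson rtranclp.rtrancl_into_rtrancl)
qed simp

lemma comp_mono: "C \<subseteq> D \<Longrightarrow> comp G C x \<subseteq> comp G D x"
  unfolding comp_def using rtranclp_adj_mono[of G C x _ D] by blast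

lemma lc_white: "colored_graph G \<Longrightarrow> c \<in> colors \<Longrightarrow> x \<in> blk G \<Longrightarrow> lc G c x \<in> wht G"
  unfolding colored_graph_def using bij_betwE by blast

lemma lc_inj:
  assumes "colored_graph G" "c \<in> colors" "x \<in> blk G" "y \<in> blk G" "lc G c x = lc G c y"
  shows "x = y"
proof -
  have "inj_on (lc G c) (blk G)"
    using assms(1,2) unfolding colored_graph_def by (blast intro: bij_betw_imp_inj_on)
  then show ?thesis by (rule inj_onD[OF _ assms(5,3,4)])
qed

lemma adj_verts:
  assumes "colored_graph G" "C \<subseteq> colors" "adj G C x y"
  shows "y \<in> verts G"
proof -
  obtain c where c: "c \<in> C" "(x \<in> blk G \<and> y = lc G c x) \<or> (y \<in> blk G \<and> x = lc G c y)"
    using assms(3) unfolding adj_def by blast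
  then have "y \<in> blk G \<or> y \<in> wht G"
    using lc_white[OF assms(1)] assms(2) by blast
  then show ?thesis by (simp add: verts_def)
qed

lemma comp_verts:
  assumes "colored_graph G" "C \<subseteq> colors" "x \<in> verts G"
  shows "comp G C x \<subseteq> verts G"
proof
  fix y assume "y \<in> comp G C x"
  then have "(adj G C)\<^sup>*\<^sup>* x y" by (simp add: comp_def)
  then show "y \<in> verts G"
  proof induction
    case base then show ?case using assms(3) .
  next
    case (step y z) then show ?case using adj_verts[OF assms(1,2)] by blast
  qed
qed

definition Pairs :: "nat set \<Rightarrow> (nat \<times> nat) set" where
  "Pairs C = {(p, q). p \<in> C \<and> q \<in> C \<and> p < q}"

lemma card_Pairs:
  assumes "finite C" shows "card (Pairs C) = card C choose 2"
proof -
  have "bij_betw (\<lambda>(p, q). {p, q}) (Pairs C) {B. B \<subseteq> C \<and> card B = 2}"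
    unfolding bij_betw_def
  proof
    show "inj_on (\<lambda>(p, q). {p, q}) (Pairs C)"
      by (auto simp: inj_on_def Pairs_def doubleton_eq_iff)
    show "(\<lambda>(p, q). {p, q}) ` Pairs C = {B. B \<subseteq> C \<and> card B = 2}"
    proof
      show "(\<lambda>(p, q). {p, q}) ` Pairs C \<subseteq> {B. B \<subseteq> C \<and> card B = 2}"
        by (auto simp: Pairs_def)
      show "{B. B \<subseteq> C \<and> card B = 2} \<subseteq> (\<lambda>(p, q). {p, q}) ` Pairs C"
      proof
        fix B assume "B \<in> {B. B \<subseteq> C \<and> card B = 2}"
        then obtain x y where B: "B = {x, y}" "x \<noteq> y" "B \<subseteq> C" by (auto simp: card_2_iff)
        then have "(min x y, max x y) \<in> Pairs C" by (auto simp: Pairs_def min_def max_def)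
        moreover have "B = (\<lambda>(p, q). {p, q}) (min x y, max x y)" using B by (auto simp: min_def max_def)
        ultimately show "B \<in> (\<lambda>(p, q). {p, q}) ` Pairs C" by blast
      qed
    qed
  qed
  then have "card (Pairs C) = card {B. B \<subseteq> C \<and> card B = 2}" by (rule bij_betw_same_card)
  also have "\<dots> = card C choose 2" using n_subsets[OF assms] .
  finally show ?thesis .
qed

text \<open>Faces are recorded as triples (p, q, F); attaching to each pair of colors
one face gives a set of triples in bijection with the pairs.\<close>
definition tagged :: "(nat \<Rightarrow> nat \<Rightarrow> 'a) \<Rightarrow> (nat \<times> nat) set \<Rightarrow> (nat \<times> nat \<times> 'a) set" where
  "tagged f P = (\<lambda>(p, q). (p, q, f p q)) ` P"

lemma mem_tagged: "(p, q, F) \<in> tagged f P \<longleftrightarrow> (p, q) \<in> P \<and> F = f p q"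
  by (auto simp: tagged_def)

lemma card_tagged: "card (tagged f P) = card P"
  unfolding tagged_def by (rule card_image) (auto simp: inj_on_def)

lemma mem_bfaces:
  "(p, q, F) \<in> bfaces K C S \<longleftrightarrow>
     (p, q) \<in> Pairs C \<and> (\<exists>x\<in>verts K. F = comp K {p, q} x) \<and> F \<subseteq> S"
  by (auto simp: bfaces_def Pairs_def)

lemma finite_bfaces: "finite C \<Longrightarrow> finite S \<Longrightarrow> finite (bfaces K C S)"
  by (rule finite_subset[of _ "C \<times> C \<times> Pow S"]) (auto simp: bfaces_def)

text \<open>Lines of colors C inside S: one line of each color at each black vertex of S.\<close>
lemma card_blines: "card (blines K C S) = card C * card (S \<inter> blk K)"
proof -
  have "blines K C S = C \<times> (S \<inter> blk K)" by (auto simp: blines_def)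
  then show ?thesis by (simp add: card_cartesian_product)
qed

lemma bfaces_mono: "S \<subseteq> T \<Longrightarrow> bfaces K C S \<subseteq> bfaces K C T"
  unfolding bfaces_def by auto

lemma card_bfaces_Un:
  assumes B: "Ba = comp K C x1" "Bb = comp K C x2" "Ba \<inter> Bb = {}"
    and fin: "finite C" "finite Ba" "finite Bb"
  shows "card (bfaces K C (Ba \<union> Bb)) = card (bfaces K C Ba) + card (bfaces K C Bb)"
proof -
  have "bfaces K C (Ba \<union> Bb) = bfaces K C Ba \<union> bfaces K C Bb"
  proof
    show "bfaces K C (Ba \<union> Bb) \<subseteq> bfaces K C Ba \<union> bfaces K C Bb"
    proof
      fix t assume t: "t \<in> bfaces K C (Ba \<union> Bb)"
      obtain p q F where t_def: "t = (p, q, F)" by (cases t)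
      obtain x where pq: "(p, q) \<in> Pairs C" and x: "F = comp K {p, q} x" and F: "F \<subseteq> Ba \<union> Bb"
        using t unfolding t_def mem_bfaces by blast
      have "{p, q} \<subseteq> C" using pq by (auto simp: Pairs_def)
      then have "F \<subseteq> comp K C x" using x comp_mono[of "{p, q}" C K x] by simp
      moreover have "x \<in> Ba \<or> x \<in> Bb" using F x comp_refl[of x K "{p, q}"] by blast
      then have "comp K C x = Ba \<or> comp K C x = Bb"
        using B(1,2) comp_eq[of x K C x1] comp_eq[of x K C x2] by auto
      ultimately have "F \<subseteq> Ba \<or> F \<subseteq> Bb" by auto
      then show "t \<in> bfaces K C Ba \<union> bfaces K C Bb"
        using t unfolding t_def Un_iff mem_bfaces by blast
    qed
    show "bfaces K C Ba \<union> bfaces K C Bb \<subseteq> bfaces K C (Ba \<union> Bb)"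
      using bfaces_mono[of Ba "Ba \<union> Bb" K C] bfaces_mono[of Bb "Ba \<union> Bb" K C] by blast
  qed
  moreover have "bfaces K C Ba \<inter> bfaces K C Bb = {}"
  proof -
    have "t \<notin> bfaces K C Bb" if tBa: "t \<in> bfaces K C Ba" for t
    proof
      assume "t \<in> bfaces K C Bb"
      obtain p q F where t_def: "t = (p, q, F)" by (cases t)
      obtain x where "F = comp K {p, q} x" "F \<subseteq> Ba"
        using tBa unfolding t_def mem_bfaces by blast
      moreover have "F \<subseteq> Bb" using \<open>t \<in> bfaces K C Bb\<close> unfolding t_def mem_bfaces by blast
      ultimately show False using comp_refl[of x K "{p, q}"] B(3) by blast
    qed
    then show ?thesis by blast
  qed
  ultimately show ?thesis
    using card_Un_disjoint[OF finite_bfaces[OF fin(1,2)] finite_bfaces[OF fin(1,3)]] by simp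
qed

lemma funpow_return:
  assumes "finite A" "inj_on f A" "f ` A \<subseteq> A" "x \<in> A"
  obtains n where "0 < n" "(f ^^ n) x = x"
proof -
  define p where "p y = (if y \<in> A then f y else y)" for y
  have "inj p"
  proof (rule injI)
    fix y z assume "p y = p z"
    then show "y = z"
      using assms(2,3) unfolding p_def by (auto split: if_splits dest: inj_onD)
  qed
  have orbit: "(p ^^ n) x = (f ^^ n) x \<and> (f ^^ n) x \<in> A" for n
    by (induction n) (use assms(3,4) in \<open>auto simp: p_def\<close>)
  then have "finite {y. \<exists>n. y = (p ^^ n) x}"
    by (auto intro: finite_subset[OF _ assms(1)])
  then obtain n where "0 < n" "(p ^^ n) x = x"
    using funpow_inj_finite[OF \<open>inj p\<close>] by blast
  then show thesis using that orbit by metis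
qed

locale contraction =
  fixes G :: "'v cgraph" and b :: 'v and i :: nat
  assumes colored: "colored_graph G"
    and b_black: "b \<in> blk G"
    and i_color: "i \<in> colors"
    and separated: "lc G i b \<notin> comp G (colors - {i}) b"
begin

abbreviation wt :: 'v where "wt \<equiv> lc G i b"
abbreviation H :: "'v cgraph" where "H \<equiv> contract G b i"
abbreviation E :: "'v set" where "E \<equiv> {b, wt}"

lemma black_white_disjoint: "blk G \<inter> wht G = {}"
  using colored by (simp add: colored_graph_def)

lemma wt_white: "wt \<in> wht G"
  using lc_white[OF colored i_color b_black] .

lemma black_not_wt: "x \<in> blk G \<Longrightarrow> x \<noteq> wt"
  using wt_white black_white_disjoint by blast

lemma white_not_b: "x \<in> wht G \<Longrightarrow> x \<noteq> b"
  using b_black black_white_disjoint by blast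

lemma b_ne_wt: "b \<noteq> wt"
  using black_not_wt[OF b_black] .

text \<open>No line of a color other than i joins b to wt (else they would share a bubble).\<close>
lemma lc_b_ne_wt: assumes "c \<in> colors" "c \<noteq> i" shows "lc G c b \<noteq> wt"
proof
  assume "lc G c b = wt"
  then have "adj G (colors - {i}) b wt"
    unfolding adj_def using assms b_black by (intro bexI[of _ c]) auto
  then show False using separated comp_step[OF comp_refl] by metis
qed

lemma blk_H: "blk H = blk G - {b}"
  by (simp add: contract_def)

lemma wht_H: "wht H = wht G - {wt}"
  by (simp add: contract_def)

lemma lc_H: "lc H c x = (if c \<noteq> i \<and> lc G c x = wt then lc G c b else lc G c x)"
  by (simp add: contract_def)

lemma verts_H: "verts H = verts G - E"
  using blk_H wht_H b_black wt_white black_not_wt white_not_b unfolding verts_def by blast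

lemma lc_H_white:
  assumes "c \<in> colors" "x \<in> blk G" "x \<noteq> b"
  shows "lc H c x \<in> wht G - {wt}"
proof (cases "c \<noteq> i \<and> lc G c x = wt")
  case True
  then show ?thesis using lc_H lc_white[OF colored assms(1) b_black] lc_b_ne_wt assms(1) by simp
next
  case False
  have "lc G c x \<noteq> wt"
    using False lc_inj[OF colored i_color assms(2) b_black] assms(3) by blast
  then show ?thesis using False lc_H lc_white[OF colored assms(1,2)] by simp
qed

definition new_line :: "nat set \<Rightarrow> 'v \<Rightarrow> 'v \<Rightarrow> bool" where
  "new_line P x y \<longleftrightarrow> (\<exists>c\<in>P - {i}. x \<in> blk G \<and> lc G c x = wt \<and> y = lc G c b)"

lemma adj_H_of_adj_G:
  assumes "adj G P x y" "x \<notin> E" "y \<notin> E"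
  shows "adj H P x y"
proof -
  obtain c where c: "c \<in> P" "(x \<in> blk G \<and> y = lc G c x) \<or> (y \<in> blk G \<and> x = lc G c y)"
    using assms(1) unfolding adj_def by blast
  then have "(x \<in> blk H \<and> y = lc H c x) \<or> (y \<in> blk H \<and> x = lc H c y)"
    using assms(2,3) blk_H lc_H by auto
  then show ?thesis unfolding adj_def using c(1) by blast
qed

lemma lc_H_cases:
  assumes "c \<in> P" "x \<in> blk H"
  shows "adj G P x (lc H c x) \<or> new_line P x (lc H c x)"
proof (cases "c \<noteq> i \<and> lc G c x = wt")
  case True
  then show ?thesis using assms blk_H lc_H unfolding new_line_def by auto
next
  case False
  then show ?thesis using assms blk_H lc_H unfolding adj_def by auto
qed

lemma adj_H_cases:
  assumes "adj H P x y"
  shows "adj G P x y \<or> new_line P x y \<or> new_line P y x"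
proof -
  obtain c where c: "c \<in> P" "(x \<in> blk H \<and> y = lc H c x) \<or> (y \<in> blk H \<and> x = lc H c y)"
    using assms unfolding adj_def by blast
  then show ?thesis
  proof (elim disjE conjE)
    assume "x \<in> blk H" "y = lc H c x"
    then have "adj G P x y \<or> new_line P x y" using lc_H_cases[OF c(1), of x] by simp
    then show ?thesis by blast
  next
    assume "y \<in> blk H" "x = lc H c y"
    then have "adj G P y x \<or> new_line P y x" using lc_H_cases[OF c(1), of y] by simp
    then show ?thesis using adj_sym[of G P y x] by blast
  qed
qed

lemma adj_H_avoids_E:
  assumes "P \<subseteq> colors" "adj H P x y"
  shows "x \<notin> E" "y \<notin> E"
proof -
  have "z \<notin> E" if uz: "adj H P u z" for u z
  proof -
    obtain c where c: "c \<in> P" "(u \<in> blk H \<and> z = lc H c u) \<or> (z \<in> blk H \<and> u = lc H c z)"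
      using uz unfolding adj_def by blast
    show ?thesis
    proof (cases "z \<in> blk H")
      case True
      then show ?thesis using blk_H black_not_wt by auto
    next
      case False
      then have u: "u \<in> blk G" "u \<noteq> b" and z: "z = lc H c u" using c blk_H by auto
      have "c \<in> colors" using c(1) assms(1) by blast
      then have "z \<in> wht G - {wt}" using lc_H_white[OF _ u] z by simp
      then show ?thesis using white_not_b by auto
    qed
  qed
  then show "x \<notin> E" "y \<notin> E" using assms(2) adj_sym[OF assms(2)] by blast+
qed

definition region :: "nat set \<Rightarrow> 'v set" where
  "region P = comp G P b \<union> comp G P wt"

lemma E_in_region: "E \<subseteq> region P"
  by (auto simp: region_def comp_refl)

lemma region_mono: "P \<subseteq> Q \<Longrightarrow> region P \<subseteq> region Q"
  unfolding region_def using comp_mono[of P Q G b] comp_mono[of P Q G wt] by blast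

lemma region_closed: "z \<in> region P \<Longrightarrow> adj G P z z' \<Longrightarrow> z' \<in> region P"
  unfolding region_def using comp_step[of z G P b z'] comp_step[of z G P wt z'] by blast

lemma region_comp: "z \<in> region P \<Longrightarrow> comp G P z \<subseteq> region P"
  unfolding region_def using comp_eq[of z G P b] comp_eq[of z G P wt] by blast

lemma comp_outside_region: "y \<notin> region P \<Longrightarrow> z \<in> comp G P y \<Longrightarrow> z \<notin> region P"
  using region_comp comp_sym[of z G P y] by blast

lemma new_line_in_region: "new_line P x y \<Longrightarrow> x \<in> region P \<and> y \<in> region P"
proof -
  assume "new_line P x y"
  then obtain c where c: "c \<in> P" "x \<in> blk G" "lc G c x = wt" "y = lc G c b"
    unfolding new_line_def by blast
  have "adj G P wt x" "adj G P b y"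
    unfolding adj_def using c b_black by (intro bexI[of _ c]; auto)+
  then show ?thesis using region_closed E_in_region by blast
qed

lemma finite_region: "P \<subseteq> colors \<Longrightarrow> finite (region P)"
proof -
  assume P: "P \<subseteq> colors"
  have "b \<in> verts G" "wt \<in> verts G" using b_black wt_white by (auto simp: verts_def)
  then have "region P \<subseteq> verts G"
    unfolding region_def using comp_verts[OF colored P] by blast
  moreover have "finite (verts G)" using colored by (simp add: colored_graph_def verts_def)
  ultimately show ?thesis by (rule finite_subset)
qed

lemma comp_H_outside:
  assumes "y \<notin> region P"
  shows "comp H P y = comp G P y"
proof (intro equalityI subsetI)
  fix z assume "z \<in> comp H P y"
  then have "(adj H P)\<^sup>*\<^sup>* y z" by (simp add: comp_def)
  then show "z \<in> comp G P y"
  proof induction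
    case base then show ?case by (rule comp_refl)
  next
    case (step z z')
    have "z \<notin> region P" using comp_outside_region[OF assms step.IH] .
    then have "adj G P z z'" using adj_H_cases[OF step.hyps(2)] new_line_in_region by blast
    then show ?case by (rule comp_step[OF step.IH])
  qed
next
  fix z assume "z \<in> comp G P y"
  then have "(adj G P)\<^sup>*\<^sup>* y z" by (simp add: comp_def)
  then show "z \<in> comp H P y"
  proof induction
    case base then show ?case by (rule comp_refl)
  next
    case (step z z')
    have "z \<in> comp G P y" using step.hyps(1) by (simp add: comp_def)
    then have "z \<notin> region P" "z' \<notin> region P"
      using comp_outside_region[OF assms] comp_step[OF _ step.hyps(2)] by blast+
    then have "adj H P z z'" using adj_H_of_adj_G[OF step.hyps(2)] E_in_region by blast
    then show ?case by (rule comp_step[OF step.IH])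
  qed
qed

lemma comp_H_inside_sub:
  assumes "P \<subseteq> colors" "y \<in> region P - E"
  shows "comp H P y \<subseteq> region P - E"
proof
  fix z assume "z \<in> comp H P y"
  then have "(adj H P)\<^sup>*\<^sup>* y z" by (simp add: comp_def)
  then show "z \<in> region P - E"
  proof induction
    case base then show ?case using assms(2) .
  next
    case (step z z')
    have "z' \<in> region P"
      using adj_H_cases[OF step.hyps(2)] region_closed new_line_in_region step.IH by blast
    then show ?case using adj_H_avoids_E[OF assms(1) step.hyps(2)] by blast
  qed
qed

text \<open>Walking along a face of colors c, c': from the black vertex x follow the
c-line to a white vertex and return along the c'-line to the black vertex
face_next c c' x.\<close>

definition face_next :: "nat \<Rightarrow> nat \<Rightarrow> 'v \<Rightarrow> 'v" where
  "face_next c c' x = the_inv_into (blk G) (lc G c') (lc G c x)"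

lemma face_next:
  assumes "c \<in> colors" "c' \<in> colors" "x \<in> blk G"
  shows "face_next c c' x \<in> blk G" "lc G c' (face_next c c' x) = lc G c x"
proof -
  have bij: "bij_betw (lc G c') (blk G) (wht G)"
    using colored assms(2) by (simp add: colored_graph_def)
  have "lc G c x \<in> lc G c' ` blk G"
    using lc_white[OF colored assms(1,3)] bij_betw_imp_surj_on[OF bij] by simp
  then show "face_next c c' x \<in> blk G" "lc G c' (face_next c c' x) = lc G c x"
    unfolding face_next_def
    using the_inv_into_into[OF bij_betw_imp_inj_on[OF bij]] f_the_inv_into_f[OF bij_betw_imp_inj_on[OF bij]]
    by auto
qed

lemma face_next_inj:
  assumes "c \<in> colors" "c' \<in> colors"
  shows "inj_on (face_next c c') (blk G)"
proof (rule inj_onI)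
  fix x y assume "x \<in> blk G" "y \<in> blk G" "face_next c c' x = face_next c c' y"
  then have "lc G c x = lc G c y" using face_next(2)[OF assms] by metis
  then show "x = y" using lc_inj[OF colored assms(1) \<open>x \<in> blk G\<close> \<open>y \<in> blk G\<close>] by simp
qed

lemma face_returns:
  assumes "c \<in> colors" "c' \<in> colors"
  obtains n where "0 < n" "(face_next c c' ^^ n) b = b"
proof -
  have "finite (blk G)" using colored by (simp add: colored_graph_def)
  moreover have "face_next c c' ` blk G \<subseteq> blk G" using face_next(1)[OF assms] by blast
  ultimately show thesis
    using funpow_return[OF _ face_next_inj[OF assms] _ b_black] that by blast
qed

lemma face_orbit:
  assumes "c \<in> colors" "c' \<in> colors"
  shows "(face_next c c' ^^ k) b \<in> blk G \<inter> comp G {c, c'} b"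
proof (induction k)
  case 0 then show ?case using b_black comp_refl by simp
next
  case (Suc k)
  define x where "x = (face_next c c' ^^ k) b"
  have x: "x \<in> blk G" "x \<in> comp G {c, c'} b" using Suc x_def by auto
  have "adj G {c, c'} x (lc G c x)" "adj G {c, c'} (lc G c x) (face_next c c' x)"
    unfolding adj_def using x(1) face_next[OF assms x(1)] by auto
  then have "face_next c c' x \<in> comp G {c, c'} b" using comp_step x(2) by metis
  then show ?case using face_next(1)[OF assms x(1)] x_def by simp
qed

lemma wt_notin_comp_b: "P \<subseteq> colors - {i} \<Longrightarrow> wt \<notin> comp G P b"
  using separated comp_mono[of P "colors - {i}" G b] by blast

lemma face_path_H:
  assumes c: "c \<in> colors" "c \<noteq> i" and c': "c' \<in> colors" "c' \<noteq> i"
  shows "(adj H {c, c'})\<^sup>*\<^sup>* (lc G c b) (lc G c' b)"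
proof -
  let ?f = "face_next c c'"
  define n where "n = (LEAST n. 0 < n \<and> (?f ^^ n) b = b)"
  obtain m where "0 < m" "(?f ^^ m) b = b" using face_returns[OF c(1) c'(1)] .
  then have n: "0 < n" "(?f ^^ n) b = b"
    using LeastI[of "\<lambda>n. 0 < n \<and> (?f ^^ n) b = b"] unfolding n_def by blast+
  have first_return: "(?f ^^ k) b \<noteq> b" if "0 < k" "k < n" for k
    using not_less_Least[of k "\<lambda>n. 0 < n \<and> (?f ^^ n) b = b"] that unfolding n_def by blast
  have "{c, c'} \<subseteq> colors - {i}" using c c' by blast
  then have avoids_E: "z \<notin> E" if "z \<in> comp G {c, c'} b" "z \<in> wht G" for z
    using that wt_notin_comp_b white_not_b by blast
  have path: "(adj H {c, c'})\<^sup>*\<^sup>* (lc G c b) (lc G c ((?f ^^ k) b))" if "k < n" for k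
    using that
  proof (induction k)
    case 0 then show ?case by simp
  next
    case (Suc k)
    define x where "x = (?f ^^ k) b"
    define x' where "x' = ?f x"
    have x: "x \<in> blk G" "x \<in> comp G {c, c'} b"
      using face_orbit[OF c(1) c'(1), of k] x_def by auto
    have x': "x' \<in> blk G" "x' \<in> comp G {c, c'} b" "x' = (?f ^^ Suc k) b"
      using face_orbit[OF c(1) c'(1), of "Suc k"] x_def x'_def by auto
    have G_lines: "adj G {c, c'} x (lc G c x)" "adj G {c, c'} (lc G c x) x'"
        "adj G {c, c'} x' (lc G c x')"
      unfolding adj_def using x(1) x'(1) face_next(2)[OF c(1) c'(1) x(1)] x'_def by auto
    have "lc G c x \<notin> E"
      using avoids_E comp_step[OF x(2) G_lines(1)] lc_white[OF colored c(1) x(1)] by blast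
    moreover have "lc G c x' \<notin> E"
      using avoids_E comp_step[OF x'(2) G_lines(3)] lc_white[OF colored c(1) x'(1)] by blast
    moreover have "x' \<notin> E"
      using first_return[of "Suc k"] Suc.prems x'(1,3) black_not_wt by auto
    ultimately have "adj H {c, c'} (lc G c x) x'" "adj H {c, c'} x' (lc G c x')"
      using adj_H_of_adj_G G_lines(2,3) by blast+
    moreover have "(adj H {c, c'})\<^sup>*\<^sup>* (lc G c b) (lc G c x)"
      using Suc x_def by simp
    ultimately show ?case
      using x'(3) by (simp add: rtranclp.rtrancl_into_rtrancl)
  qed
  define y where "y = (?f ^^ (n - 1)) b"
  have "?f y = b"
    using n unfolding y_def by (metis Suc_pred' funpow.simps(2) o_apply)
  then have "lc G c' b = lc G c y"
    using face_next(2)[OF c(1) c'(1)] face_orbit[OF c(1) c'(1), of "n - 1"] y_def by force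
  then show ?thesis using path[of "n - 1"] n(1) y_def by simp
qed

lemma E_neighbour:
  assumes "P \<subseteq> colors" "adj G P z e" "e \<in> E" "z \<notin> E"
  obtains c where "c \<in> P - {i}" "z = lc G c b \<or> (z \<in> blk G \<and> lc H c z = lc G c b)"
proof -
  obtain c where c: "c \<in> P" "(z \<in> blk G \<and> e = lc G c z) \<or> (e \<in> blk G \<and> z = lc G c e)"
    using assms(2) unfolding adj_def by blast
  show thesis
  proof (cases "z \<in> blk G \<and> e = lc G c z")
    case True
    then have "e \<in> wht G" using lc_white[OF colored] c(1) assms(1) by blast
    then have "e = wt" using assms(3) white_not_b by blast
    with True have "c \<noteq> i" using lc_inj[OF colored i_color _ b_black] assms(4) by auto
    then show thesis using that c(1) True \<open>e = wt\<close> lc_H by simp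
  next
    case False
    then have "e = b" "z = lc G c b" using c assms(3) black_not_wt by auto
    then have "c \<noteq> i" using assms(4) by auto
    then show thesis using that c(1) \<open>z = lc G c b\<close> by simp
  qed
qed

lemma comp_H_inside:
  assumes P: "P \<subseteq> colors" "c0 \<in> P" "c0 \<noteq> i" and y: "y \<in> region P - E"
  shows "comp H P y = region P - E"
proof
  show "comp H P y \<subseteq> region P - E" using comp_H_inside_sub[OF P(1) y] .
  define a where "a = lc G c0 b"
  have to_a: "(adj H P)\<^sup>*\<^sup>* (lc G c b) a" if "c \<in> P - {i}" for c
  proof -
    have "c \<in> colors" "c \<noteq> i" "c0 \<in> colors" using that P by auto
    then have "(adj H {c, c0})\<^sup>*\<^sup>* (lc G c b) a"
      unfolding a_def using face_path_H P(3) by simp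
    moreover have "{c, c0} \<subseteq> P" using that P(2) by blast
    ultimately show ?thesis by (rule rtranclp_adj_mono)
  qed
  have G_path: "(adj H P)\<^sup>*\<^sup>* z a" if "(adj G P)\<^sup>*\<^sup>* z e" "e \<in> E" "z \<notin> E" for z e
    using that
  proof (induction rule: converse_rtranclp_induct)
    case base then show ?case by simp
  next
    case (step z z1)
    show ?case
    proof (cases "z1 \<in> E")
      case True
      then obtain c where c: "c \<in> P - {i}" "z = lc G c b \<or> (z \<in> blk G \<and> lc H c z = lc G c b)"
        using E_neighbour[OF P(1) step.hyps(1) _ step.prems(2)] by blast
      then show ?thesis
      proof (elim disjE conjE)
        assume "z = lc G c b" then show ?thesis using to_a[OF c(1)] by simp
      next
        assume "z \<in> blk G" "lc H c z = lc G c b"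
        then have "adj H P z (lc G c b)"
          unfolding adj_def using c(1) blk_H step.prems(2) by (intro bexI[of _ c]) auto
        then show ?thesis using to_a[OF c(1)] by (rule converse_rtranclp_into_rtranclp)
      qed
    next
      case False
      then have "adj H P z z1" using adj_H_of_adj_G[OF step.hyps(1) step.prems(2)] by blast
      then show ?thesis using step.IH[OF step.prems(1) False] by (rule converse_rtranclp_into_rtranclp)
    qed
  qed
  have reach_a: "(adj H P)\<^sup>*\<^sup>* z a" if "z \<in> region P - E" for z
  proof -
    have "b \<in> comp G P z \<or> wt \<in> comp G P z"
      using that comp_sym[of z G P b] comp_sym[of z G P wt] unfolding region_def by blast
    then have "(adj G P)\<^sup>*\<^sup>* z b \<or> (adj G P)\<^sup>*\<^sup>* z wt"
      by (simp add: comp_def)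
    moreover have "z \<notin> E" using that by blast
    ultimately show ?thesis using G_path[of z b] G_path[of z wt] by blast
  qed
  show "region P - E \<subseteq> comp H P y"
  proof
    fix z assume "z \<in> region P - E"
    then have "a \<in> comp H P y" "a \<in> comp H P z"
      using reach_a[OF y] reach_a by (simp_all add: comp_def)
    then show "z \<in> comp H P y" using comp_trans[OF _ comp_sym] by fast
  qed
qed

lemma pair_has_color_ne_i:
  assumes "(p, q) \<in> Pairs C" obtains c0 where "c0 \<in> {p, q}" "c0 \<noteq> i"
  using assms unfolding Pairs_def by (cases "p = i") auto

lemma region_witness:
  assumes "P \<subseteq> colors" "c0 \<in> P" "c0 \<noteq> i"
  shows "lc G c0 b \<in> region P - E" "lc G c0 b \<in> verts H"
proof -
  have "adj G P b (lc G c0 b)" unfolding adj_def using assms(2) b_black by blast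
  then have "lc G c0 b \<in> region P" using region_closed E_in_region by blast
  moreover have "lc G c0 b \<in> wht G" "lc G c0 b \<noteq> wt"
    using lc_white[OF colored _ b_black] lc_b_ne_wt assms by auto
  ultimately show "lc G c0 b \<in> region P - E" "lc G c0 b \<in> verts H"
    using white_not_b verts_H by (auto simp: verts_def)
qed

lemma comps_H:
  assumes C: "C \<subseteq> colors" "c0 \<in> C" "c0 \<noteq> i"
  shows "{comp H C x | x. x \<in> verts H} =
           insert (region C - E) {comp G C x | x. x \<in> verts G \<and> x \<notin> region C}"
proof (intro equalityI subsetI)
  fix Y assume "Y \<in> {comp H C x | x. x \<in> verts H}"
  then obtain x where x: "x \<in> verts G" "x \<notin> E" "Y = comp H C x" using verts_H by blast
  then show "Y \<in> insert (region C - E) {comp G C x | x. x \<in> verts G \<and> x \<notin> region C}"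
    using comp_H_inside[OF C] comp_H_outside[of x C] by (cases "x \<in> region C") auto
next
  fix Y assume Y: "Y \<in> insert (region C - E) {comp G C x | x. x \<in> verts G \<and> x \<notin> region C}"
  show "Y \<in> {comp H C x | x. x \<in> verts H}"
  proof (cases "Y = region C - E")
    case True
    then show ?thesis
      using region_witness[OF C] comp_H_inside[OF C, of "lc G c0 b"] by blast
  next
    case False
    then obtain x where x: "x \<in> verts G" "x \<notin> region C" "Y = comp G C x" using Y by blast
    then have "x \<in> verts H" using verts_H E_in_region by blast
    then show ?thesis using x comp_H_outside by blast
  qed
qed

lemma unchanged_component:
  assumes C: "C \<subseteq> colors" and Y: "Y = comp G C x0" "Y \<inter> region C = {}"
  shows "(\<forall>c\<in>C. \<forall>x\<in>Y \<inter> blk G. lc H c x = lc G c x)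
       \<and> blines H C Y = blines G C Y \<and> bfaces H C Y = bfaces G C Y
       \<and> genus H C Y = genus G C Y"
proof -
  have EY: "b \<notin> Y" "wt \<notin> Y" using Y(2) E_in_region by blast+
  have lines: "lc H c x = lc G c x" if "c \<in> C" "x \<in> Y \<inter> blk G" for c x
  proof -
    have "adj G C x (lc G c x)" unfolding adj_def using that by blast
    then have "lc G c x \<in> Y" using comp_step[of x G C x0] that(2) Y(1) by blast
    then show ?thesis using EY lc_H by auto
  qed
  have blines: "blines H C Y = blines G C Y"
    using EY blk_H unfolding blines_def by auto
  have face: "comp H {p, q} x = comp G {p, q} x" "x \<in> verts H \<longleftrightarrow> x \<in> verts G"
    if "(p, q) \<in> Pairs C" "x \<in> Y" for p q x
  proof -
    have "region {p, q} \<subseteq> region C" using that(1) by (intro region_mono) (auto simp: Pairs_def)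
    then have "x \<notin> region {p, q}" using that(2) Y(2) by blast
    then show "comp H {p, q} x = comp G {p, q} x" by (rule comp_H_outside)
    show "x \<in> verts H \<longleftrightarrow> x \<in> verts G" using that(2) EY verts_H by blast
  qed
  have "(p, q, F) \<in> bfaces H C Y \<longleftrightarrow> (p, q, F) \<in> bfaces G C Y" for p q F
  proof -
    have "F \<subseteq> Y \<Longrightarrow> F = comp K {p, q} x \<Longrightarrow> x \<in> Y" for K x
      using comp_refl[of x K "{p, q}"] by blast
    then show ?thesis unfolding mem_bfaces using face by metis
  qed
  then have bfaces: "bfaces H C Y = bfaces G C Y" by auto
  then show ?thesis using lines blines by (simp add: genus_def)
qed

text \<open>Faces of G inside the region: those avoiding E are faces of H as well; the
others are the face through b for each pair of colors, and the face through wt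
for each pair of colors different from i (a pair containing i joins b to wt).\<close>

definition faces_off_E :: "nat set \<Rightarrow> (nat \<times> nat \<times> 'v set) set" where
  "faces_off_E C = {(p, q, F). (p, q, F) \<in> bfaces G C (region C) \<and> F \<inter> E = {}}"

lemma faces_G_region:
  assumes C: "C \<subseteq> colors"
  shows "bfaces G C (region C) = faces_off_E C \<union> tagged (\<lambda>p q. comp G {p, q} b) (Pairs C)
           \<union> tagged (\<lambda>p q. comp G {p, q} wt) (Pairs (C - {i}))"
    (is "_ = _ \<union> ?Tb \<union> ?Tw")
proof (intro equalityI subsetI)
  fix t assume t: "t \<in> bfaces G C (region C)"
  obtain p q F where t_def: "t = (p, q, F)" by (cases t)
  obtain x where pq: "(p, q) \<in> Pairs C" and F: "F = comp G {p, q} x"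
    using t unfolding t_def mem_bfaces by blast
  have wt_b: "comp G {p, q} wt = comp G {p, q} b" if "i \<in> {p, q}"
  proof -
    have "adj G {p, q} b wt" unfolding adj_def using that b_black by blast
    then have "wt \<in> comp G {p, q} b" by (rule comp_step[OF comp_refl])
    then show ?thesis by (rule comp_eq)
  qed
  consider "F \<inter> E = {}" | "F = comp G {p, q} b" | "F = comp G {p, q} wt" "i \<notin> {p, q}"
    using F comp_eq[of b G "{p, q}" x] comp_eq[of wt G "{p, q}" x] wt_b by blast
  then show "t \<in> faces_off_E C \<union> ?Tb \<union> ?Tw"
  proof cases
    case 1 then show ?thesis using t unfolding t_def faces_off_E_def by blast
  next
    case 2 then show ?thesis using pq unfolding t_def by (simp add: mem_tagged)
  next
    case 3
    then have "(p, q) \<in> Pairs (C - {i})" using pq unfolding Pairs_def by auto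
    then show ?thesis using 3 unfolding t_def by (simp add: mem_tagged)
  qed
next
  fix t assume t: "t \<in> faces_off_E C \<union> ?Tb \<union> ?Tw"
  obtain p q F where t_def: "t = (p, q, F)" by (cases t)
  have b_wt: "b \<in> verts G" "wt \<in> verts G" using b_black wt_white by (auto simp: verts_def)
  have sub: "comp G {p, q} b \<subseteq> region C" "comp G {p, q} wt \<subseteq> region C" if "(p, q) \<in> Pairs C"
    using region_mono[of "{p, q}" C] that unfolding Pairs_def region_def by auto
  have "Pairs (C - {i}) \<subseteq> Pairs C" unfolding Pairs_def by auto
  then consider "t \<in> faces_off_E C" | "(p, q) \<in> Pairs C" "F = comp G {p, q} b"
    | "(p, q) \<in> Pairs C" "F = comp G {p, q} wt"
    using t unfolding t_def by (auto simp: mem_tagged)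
  then show "t \<in> bfaces G C (region C)"
  proof cases
    case 1 then show ?thesis unfolding faces_off_E_def t_def by blast
  next
    case 2 then show ?thesis using sub b_wt unfolding t_def mem_bfaces by blast
  next
    case 3 then show ?thesis using sub b_wt unfolding t_def mem_bfaces by blast
  qed
qed

lemma faces_H_region:
  assumes C: "C \<subseteq> colors"
  shows "bfaces H C (region C - E) = faces_off_E C \<union> tagged (\<lambda>p q. region {p, q} - E) (Pairs C)"
    (is "_ = _ \<union> ?TH")
proof (intro equalityI subsetI)
  fix t assume t: "t \<in> bfaces H C (region C - E)"
  obtain p q F where t_def: "t = (p, q, F)" by (cases t)
  obtain x where pq: "(p, q) \<in> Pairs C" and x: "x \<in> verts H" "F = comp H {p, q} x"
    and F: "F \<subseteq> region C - E"
    using t unfolding t_def mem_bfaces by blast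
  obtain c0 where c0: "c0 \<in> {p, q}" "c0 \<noteq> i" using pair_has_color_ne_i[OF pq] .
  have pqC: "{p, q} \<subseteq> colors" using pq C unfolding Pairs_def by blast
  have "x \<notin> E" using x(1) verts_H by blast
  show "t \<in> faces_off_E C \<union> ?TH"
  proof (cases "x \<in> region {p, q}")
    case True
    then have "F = region {p, q} - E" using comp_H_inside[OF pqC c0] x(2) \<open>x \<notin> E\<close> by blast
    then show ?thesis using pq unfolding t_def by (simp add: mem_tagged)
  next
    case False
    then have "F = comp G {p, q} x" using comp_H_outside x(2) by blast
    moreover have "x \<in> verts G" using x(1) verts_H by blast
    ultimately have "t \<in> faces_off_E C"
      using F pq unfolding t_def faces_off_E_def mem_bfaces by blast
    then show ?thesis by blast
  qed
next
  fix t assume t: "t \<in> faces_off_E C \<union> ?TH"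
  obtain p q F where t_def: "t = (p, q, F)" by (cases t)
  show "t \<in> bfaces H C (region C - E)"
  proof (cases "t \<in> faces_off_E C")
    case True
    then obtain x where pq: "(p, q) \<in> Pairs C" and x: "x \<in> verts G" "F = comp G {p, q} x"
      and F: "F \<subseteq> region C" "F \<inter> E = {}"
      unfolding t_def faces_off_E_def mem_bfaces by blast
    have "x \<notin> region {p, q}"
    proof
      assume "x \<in> region {p, q}"
      then have "b \<in> comp G {p, q} x \<or> wt \<in> comp G {p, q} x"
        using comp_sym[of x G "{p, q}"] unfolding region_def by blast
      then show False using x(2) F(2) by blast
    qed
    then have "F = comp H {p, q} x" using comp_H_outside x(2) by blast
    moreover have "x \<in> verts H" using x F(2) comp_refl[of x G "{p, q}"] verts_H by blast
    ultimately show ?thesis using pq F unfolding t_def mem_bfaces by blast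
  next
    case False
    then have pq: "(p, q) \<in> Pairs C" and F: "F = region {p, q} - E"
      using t unfolding t_def by (auto simp: mem_tagged)
    obtain c0 where c0: "c0 \<in> {p, q}" "c0 \<noteq> i" using pair_has_color_ne_i[OF pq] .
    have pqC: "{p, q} \<subseteq> colors" using pq C unfolding Pairs_def by blast
    have "region {p, q} \<subseteq> region C" using pq by (intro region_mono) (auto simp: Pairs_def)
    moreover have "F = comp H {p, q} (lc G c0 b)" "lc G c0 b \<in> verts H"
      using region_witness[OF pqC c0] comp_H_inside[OF pqC c0, of "lc G c0 b"] F by auto
    ultimately show ?thesis using pq F unfolding t_def mem_bfaces by blast
  qed
qed

lemma faces_count:
  assumes C: "C \<subseteq> colors"
  shows "card (bfaces G C (region C)) = card (bfaces H C (region C - E)) + card (Pairs (C - {i}))"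
proof -
  let ?A = "faces_off_E C"
  let ?Tb = "tagged (\<lambda>p q. comp G {p, q} b) (Pairs C)"
  let ?Tw = "tagged (\<lambda>p q. comp G {p, q} wt) (Pairs (C - {i}))"
  let ?TH = "tagged (\<lambda>p q. region {p, q} - E) (Pairs C)"
  have finC: "finite C" using C finite_subset by (auto simp: colors_def)
  have finP: "finite (Pairs D)" if "finite D" for D
  proof (rule finite_subset)
    show "Pairs D \<subseteq> D \<times> D" by (auto simp: Pairs_def)
  qed (use that in simp)
  have fin: "finite ?A" "finite ?Tb" "finite ?Tw" "finite ?TH"
    using finite_bfaces[OF finC finite_region[OF C], of G] finP finC
    by (auto simp: faces_off_E_def tagged_def intro: finite_subset)
  have A_Tb: "?A \<inter> ?Tb = {}"
  proof -
    have "(p, q, F) \<notin> ?A" if "(p, q, F) \<in> ?Tb" for p q F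
      using that comp_refl[of b G "{p, q}"] by (auto simp: mem_tagged faces_off_E_def)
    then show ?thesis by auto
  qed
  have ATb_Tw: "(?A \<union> ?Tb) \<inter> ?Tw = {}"
  proof -
    have "(p, q, F) \<notin> ?A \<union> ?Tb" if "(p, q, F) \<in> ?Tw" for p q F
    proof -
      have pq: "{p, q} \<subseteq> colors - {i}" "F = comp G {p, q} wt"
        using that C by (auto simp: mem_tagged Pairs_def)
      then have "comp G {p, q} wt \<noteq> comp G {p, q} b"
        using wt_notin_comp_b comp_refl[of wt G "{p, q}"] by metis
      then show ?thesis using pq comp_refl[of wt G "{p, q}"]
        by (auto simp: mem_tagged faces_off_E_def)
    qed
    then show ?thesis by auto
  qed
  have A_TH: "?A \<inter> ?TH = {}"
  proof -
    have "(p, q, F) \<notin> ?A" if "(p, q, F) \<in> ?TH" for p q F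
    proof
      assume "(p, q, F) \<in> ?A"
      then obtain x where x: "F = comp G {p, q} x" "F \<inter> E = {}"
        unfolding faces_off_E_def mem_bfaces by blast
      have F: "F = region {p, q} - E" using that by (simp add: mem_tagged)
      then have "x \<in> region {p, q}" using x comp_refl[of x G "{p, q}"] by blast
      then have "b \<in> comp G {p, q} x \<or> wt \<in> comp G {p, q} x"
        using comp_sym[of x G "{p, q}"] unfolding region_def by blast
      then show False using x by blast
    qed
    then show ?thesis by auto
  qed
  have "card (bfaces G C (region C)) = card ?A + card (Pairs C) + card (Pairs (C - {i}))"
    unfolding faces_G_region[OF C]
    using card_Un_disjoint[OF _ fin(3) ATb_Tw] card_Un_disjoint[OF fin(1,2) A_Tb] fin
    by (simp add: card_tagged)
  moreover have "card (bfaces H C (region C - E)) = card ?A + card (Pairs C)"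
    unfolding faces_H_region[OF C] using card_Un_disjoint[OF fin(1,4) A_TH]
    by (simp add: card_tagged)
  ultimately show ?thesis by simp
qed

lemma card_region_verts: "C \<subseteq> colors \<Longrightarrow> card (region C) = card (region C - E) + 2"
  using finite_region E_in_region b_ne_wt card_Diff_subset[of E "region C"] card_mono[of "region C" E]
  by force

lemma card_region_blines:
  assumes "C \<subseteq> colors"
  shows "card (blines G C (region C)) = card (blines H C (region C - E)) + card C"
proof -
  have "(region C - E) \<inter> blk H = (region C \<inter> blk G) - {b}"
    using blk_H black_not_wt by blast
  moreover have "b \<in> region C \<inter> blk G" using E_in_region b_black by blast
  moreover have "finite (region C \<inter> blk G)" using finite_region[OF assms] by blast
  ultimately have "card (region C \<inter> blk G) = card ((region C - E) \<inter> blk H) + 1"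
    using card_Suc_Diff1[of "region C \<inter> blk G" b] by simp
  then show ?thesis by (simp add: card_blines)
qed

lemma bubble_of_line:
  assumes vw: "(v = b \<and> w = wt) \<or> (w = b \<and> v = wt)" and k: "k \<in> colors - {i}"
  shows "let C = colors - {k}; X = comp G C v in
          w \<in> X
        \<and> bubbles H k = insert (X - {v, w}) {Y \<in> bubbles G k. v \<notin> Y}
        \<and> card X = card (X - {v, w}) + 2
        \<and> card (blines G C X) = card (blines H C (X - {v, w})) + 3
        \<and> card (bfaces G C X) = card (bfaces H C (X - {v, w})) + 1
        \<and> genus H C (X - {v, w}) = genus G C X
        \<and> (\<forall>Y\<in>bubbles G k. v \<notin> Y \<longrightarrow>
              (\<forall>c\<in>C. \<forall>x\<in>Y \<inter> blk G. lc H c x = lc G c x)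
            \<and> blines H C Y = blines G C Y \<and> bfaces H C Y = bfaces G C Y
            \<and> genus H C Y = genus G C Y)"
proof -
  define C where "C = colors - {k}"
  define X where "X = comp G C v"
  have C: "C \<subseteq> colors" "i \<in> C" "card C = 3"
    using k i_color unfolding C_def by (auto simp: colors_def)
  then have "card (C - {i}) = 2" by simp
  then have "C - {i} \<noteq> {}" by force
  then obtain c0 where c0: "c0 \<in> C" "c0 \<noteq> i" by blast
  have "adj G C b wt" unfolding adj_def using b_black C(2) by blast
  then have "wt \<in> comp G C b" by (rule comp_step[OF comp_refl])
  then have X: "X = region C" and vwE: "{v, w} = E"
    using vw comp_eq[of wt G C b] unfolding X_def region_def by auto
  have in_X: "v \<in> comp G C x \<longleftrightarrow> x \<in> region C" for x
    using comp_sym[of v G C x] comp_sym[of x G C v] X X_def by blast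
  have others: "{Y \<in> bubbles G k. v \<notin> Y} = {comp G C x | x. x \<in> verts G \<and> x \<notin> region C}"
    using in_X unfolding bubbles_def C_def by blast
  have f1: "w \<in> X" using X vwE E_in_region by blast
  have "bubbles H k = insert (region C - E) {comp G C x | x. x \<in> verts G \<and> x \<notin> region C}"
    using comps_H[OF C(1) c0] unfolding bubbles_def C_def[symmetric] .
  then have f2: "bubbles H k = insert (X - {v, w}) {Y \<in> bubbles G k. v \<notin> Y}"
    unfolding others X vwE .
  have f3: "card X = card (X - {v, w}) + 2"
    using card_region_verts[OF C(1)] X vwE by simp
  have f4: "card (blines G C X) = card (blines H C (X - {v, w})) + 3"
    using card_region_blines[OF C(1)] X vwE C(3) by simp
  have "finite (C - {i})" using C(1) finite_subset by (auto simp: colors_def)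
  then have f5: "card (bfaces G C X) = card (bfaces H C (X - {v, w})) + 1"
    using faces_count[OF C(1)] card_Pairs[of "C - {i}"] \<open>card (C - {i}) = 2\<close> X vwE by simp
  have f6: "genus H C (X - {v, w}) = genus G C X"
    using f3 f4 f5 unfolding genus_def by simp
  have f7: "\<forall>Y\<in>bubbles G k. v \<notin> Y \<longrightarrow>
      (\<forall>c\<in>C. \<forall>x\<in>Y \<inter> blk G. lc H c x = lc G c x)
      \<and> blines H C Y = blines G C Y \<and> bfaces H C Y = bfaces G C Y \<and> genus H C Y = genus G C Y"
  proof (intro ballI impI)
    fix Y assume "Y \<in> bubbles G k" "v \<notin> Y"
    then obtain x where Y: "Y = comp G C x" "x \<notin> region C"
      using others by blast
    then have "Y \<inter> region C = {}" using comp_outside_region[OF Y(2)] by blast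
    then show "(\<forall>c\<in>C. \<forall>x\<in>Y \<inter> blk G. lc H c x = lc G c x)
      \<and> blines H C Y = blines G C Y \<and> bfaces H C Y = bfaces G C Y \<and> genus H C Y = genus G C Y"
      by (rule unchanged_component[OF C(1) Y(1)])
  qed
  show ?thesis
    unfolding Let_def C_def[symmetric] X_def[symmetric] using f1 f2 f3 f4 f5 f6 f7 by (intro conjI)
qed

lemma merged_bubble:
  assumes vw: "(v = b \<and> w = wt) \<or> (w = b \<and> v = wt)"
  shows "let C = colors - {i}; Ba = comp G C v; Bb = comp G C w;
          M = (Ba \<union> Bb) - {v, w} in
          bubbles H i = insert M (bubbles G i - {Ba, Bb})
        \<and> card M + 2 = card Ba + card Bb
        \<and> card (blines H C M) + 3 = card (blines G C Ba) + card (blines G C Bb)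
        \<and> card (bfaces H C M) + 3 = card (bfaces G C Ba) + card (bfaces G C Bb)
        \<and> genus H C M = genus G C Ba + genus G C Bb
        \<and> (genus G C Ba = 0 \<longrightarrow> genus H C M = genus G C Bb)
        \<and> (\<forall>Y\<in>bubbles G i - {Ba, Bb}.
              (\<forall>c\<in>C. \<forall>x\<in>Y \<inter> blk G. lc H c x = lc G c x)
            \<and> blines H C Y = blines G C Y \<and> bfaces H C Y = bfaces G C Y
            \<and> genus H C Y = genus G C Y)"
proof -
  define C where "C = colors - {i}"
  define Ba where "Ba = comp G C v"
  define Bb where "Bb = comp G C w"
  define M where "M = (Ba \<union> Bb) - {v, w}"
  have C: "C \<subseteq> colors" "card C = 3" "C - {i} = C" "finite C"
    using i_color unfolding C_def by (auto simp: colors_def)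
  then obtain c0 where c0: "c0 \<in> C" "c0 \<noteq> i" by (metis card.empty ex_in_conv zero_neq_numeral Diff_iff singletonI)
  have region: "region C = Ba \<union> Bb" and vwE: "{v, w} = E" and M: "M = region C - E"
    using vw unfolding region_def Ba_def Bb_def M_def by auto
  have disjoint: "Ba \<inter> Bb = {}"
  proof
    show "Ba \<inter> Bb \<subseteq> {}"
    proof
      fix z assume "z \<in> Ba \<inter> Bb"
      then have "comp G C b = comp G C wt"
        using vw comp_meet[of z G C v w] unfolding Ba_def Bb_def by auto
      then show "z \<in> {}" using separated comp_refl[of wt G C] unfolding C_def by simp
    qed
  qed simp
  have fin: "finite Ba" "finite Bb" using finite_region[OF C(1)] region by auto
  have in_region: "x \<in> region C \<longleftrightarrow> comp G C x = Ba \<or> comp G C x = Bb" for x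
    using region comp_eq[of x G C v] comp_eq[of x G C w] comp_refl[of x G C] unfolding Ba_def Bb_def
    by auto
  have others: "bubbles G i - {Ba, Bb} = {comp G C x | x. x \<in> verts G \<and> x \<notin> region C}"
    using in_region unfolding bubbles_def C_def by blast
  have "bubbles H i = insert (region C - E) {comp G C x | x. x \<in> verts G \<and> x \<notin> region C}"
    using comps_H[OF C(1) c0] unfolding bubbles_def C_def[symmetric] .
  then have f1: "bubbles H i = insert M (bubbles G i - {Ba, Bb})"
    unfolding others M .
  have f2: "card M + 2 = card Ba + card Bb"
    using card_region_verts[OF C(1)] card_Un_disjoint[OF fin disjoint] region M by simp
  have "region C \<inter> blk G = (Ba \<inter> blk G) \<union> (Bb \<inter> blk G)"
    "(Ba \<inter> blk G) \<inter> (Bb \<inter> blk G) = {}"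
    using region disjoint by blast+
  then have "card (region C \<inter> blk G) = card (Ba \<inter> blk G) + card (Bb \<inter> blk G)"
    using card_Un_disjoint[of "Ba \<inter> blk G" "Bb \<inter> blk G"] fin by simp
  then have f3: "card (blines H C M) + 3 = card (blines G C Ba) + card (blines G C Bb)"
    using card_region_blines[OF C(1)] M C(2) by (simp add: card_blines)
  have "card (Pairs C) = 3" using card_Pairs[OF C(4)] C(2) by (simp add: choose_two)
  then have f4: "card (bfaces H C M) + 3 = card (bfaces G C Ba) + card (bfaces G C Bb)"
    using faces_count[OF C(1)] C(3) M region card_bfaces_Un[OF Ba_def Bb_def disjoint C(4) fin]
    by simp
  have f5: "genus H C M = genus G C Ba + genus G C Bb"
  proof -
    have "real (card M) = real (card Ba) + real (card Bb) - 2"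
      "real (card (blines H C M)) = real (card (blines G C Ba)) + real (card (blines G C Bb)) - 3"
      "real (card (bfaces H C M)) = real (card (bfaces G C Ba)) + real (card (bfaces G C Bb)) - 3"
      using f2 f3 f4 by linarith+
    then show ?thesis unfolding genus_def by (simp add: field_simps)
  qed
  then have f6: "genus G C Ba = 0 \<longrightarrow> genus H C M = genus G C Bb" by simp
  have f7: "\<forall>Y\<in>bubbles G i - {Ba, Bb}.
      (\<forall>c\<in>C. \<forall>x\<in>Y \<inter> blk G. lc H c x = lc G c x)
      \<and> blines H C Y = blines G C Y \<and> bfaces H C Y = bfaces G C Y \<and> genus H C Y = genus G C Y"
  proof
    fix Y assume "Y \<in> bubbles G i - {Ba, Bb}"
    then obtain x where Y: "Y = comp G C x" "x \<notin> region C" using others by blast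
    then have "Y \<inter> region C = {}" using comp_outside_region[OF Y(2)] by blast
    then show "(\<forall>c\<in>C. \<forall>x\<in>Y \<inter> blk G. lc H c x = lc G c x)
      \<and> blines H C Y = blines G C Y \<and> bfaces H C Y = bfaces G C Y \<and> genus H C Y = genus G C Y"
      by (rule unchanged_component[OF C(1) Y(1)])
  qed
  show ?thesis
    unfolding Let_def C_def[symmetric] Ba_def[symmetric] Bb_def[symmetric] M_def[symmetric]
    using f1 f2 f3 f4 f5 f6 f7 by (intro conjI)
qed

end

theorem mainTheorem3:
  fixes G :: "'v cgraph" and b v w :: 'v and i :: nat
  assumes "colored_graph G"
    and "b \<in> blk G" and "i \<in> colors"
    and "(v = b \<and> w = lc G i b) \<or> (w = b \<and> v = lc G i b)"
    and "comp G (colors - {i}) v \<noteq> comp G (colors - {i}) w"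
  shows
    "(\<forall>k\<in>colors - {i}.
        let C = colors - {k}; X = comp G C v; H = contract G b i in
          w \<in> X
        \<and> bubbles H k = insert (X - {v, w}) {Y \<in> bubbles G k. v \<notin> Y}
        \<and> card X = card (X - {v, w}) + 2
        \<and> card (blines G C X) = card (blines H C (X - {v, w})) + 3
        \<and> card (bfaces G C X) = card (bfaces H C (X - {v, w})) + 1
        \<and> genus H C (X - {v, w}) = genus G C X
        \<and> (\<forall>Y\<in>bubbles G k. v \<notin> Y \<longrightarrow>
              (\<forall>c\<in>C. \<forall>x\<in>Y \<inter> blk G. lc H c x = lc G c x)
            \<and> blines H C Y = blines G C Y \<and> bfaces H C Y = bfaces G C Y
            \<and> genus H C Y = genus G C Y))
   \<and> (let C = colors - {i}; Ba = comp G C v; Bb = comp G C w; H = contract G b i;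
          M = (Ba \<union> Bb) - {v, w} in
          bubbles H i = insert M (bubbles G i - {Ba, Bb})
        \<and> card M + 2 = card Ba + card Bb
        \<and> card (blines H C M) + 3 = card (blines G C Ba) + card (blines G C Bb)
        \<and> card (bfaces H C M) + 3 = card (bfaces G C Ba) + card (bfaces G C Bb)
        \<and> genus H C M = genus G C Ba + genus G C Bb
        \<and> (genus G C Ba = 0 \<longrightarrow> genus H C M = genus G C Bb)
        \<and> (\<forall>Y\<in>bubbles G i - {Ba, Bb}.
              (\<forall>c\<in>C. \<forall>x\<in>Y \<inter> blk G. lc H c x = lc G c x)
            \<and> blines H C Y = blines G C Y \<and> bfaces H C Y = bfaces G C Y
            \<and> genus H C Y = genus G C Y))"
proof -
  have "lc G i b \<notin> comp G (colors - {i}) b"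
  proof
    assume "lc G i b \<in> comp G (colors - {i}) b"
    then have "comp G (colors - {i}) (lc G i b) = comp G (colors - {i}) b" by (rule comp_eq)
    then show False using assms(4,5) by auto
  qed
  then interpret contraction G b i
    using assms(1-3) by unfold_locales
  show ?thesis
    using conjI[OF ballI[OF bubble_of_line[OF assms(4)]] merged_bubble[OF assms(4)]]
    unfolding Let_def .
qed

end
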